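(* Let $1\le r<m$ and $0<\varepsilon<1$. (a) For every $g\in[1,m-r]$ and every $\xi\in\Gamma^g$, $\mu(\xi)\le\mu(\xi_*^g)$, where $\xi_*^g=(0^{r-1},1^{m-r-g},0,1^g)\in\Gamma^g$. (b) For every left-end path $\xi\in\Gamma$, $\mu(\xi)\le\mu(\xi_* )$ where $\xi_*=(0^r,1^{m-r})$; and for every right-end path in $\Gamma$ with end subpath $\underline\xi$, $\mu(\underline\xi)\le\mu(\xi_* )$. Thus $\xi_*$ is the weakest path of $\Gamma$ and $\xi_*^g$ is the weakest path of $\Gamma^g$.
   Context: $\mu$ is defined on finite binary strings by $\mu(\varnothing)=\varepsilon^{-2}-1$, $\mu(\zeta,0)=(\mu(\zeta)+1)^2-1$, $\mu(\zeta,1)=\mu(\zeta)/2$. Paths: start at node $(m,r)$; a step $0$ moves $(m',r')\to(m'-1,r'-1)$, a step $1$ moves $(m',r')\to(m'-1,r')$; the walk (end subpath) stops as soon as it reaches a node $(g,0)$ with $g\ge1$ (left end) or $(h,h)$ with $h\ge1$ (right end). A left-end path is an end subpath ending at $(g,0)$ followed by $1^g$ (length $m$); a right-end path is an end subpath ending at $(h,h)$ followed by any $h$ bits. $\Gamma$, the set of all such paths, is exactly the set of binary strings of length $m$ with Hamming weight $\ge m-r$. $\Gamma^g\subseteq\Gamma$ is the set of left-end paths whose end subpath ends at $(g,0)$, i.e. strings $(\zeta,0,1^g)$ where $\zeta$ has length $m-g-1$ and exactly $r-1$ zeros. *)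

theory Defs
  imports Complex_Main
begin

(* Binary strings are lists of bool: False = bit 0, True = bit 1.
   (zeta,b) means appending b at the end. *)

fun mu_step :: "real \<Rightarrow> bool \<Rightarrow> real" where
  "mu_step x False = (x + 1)^2 - 1"
| "mu_step x True = x / 2"

definition mu :: "real \<Rightarrow> bool list \<Rightarrow> real" where
  "mu eps xs = foldl mu_step (1 / eps^2 - 1) xs"

definition zeros :: "bool list \<Rightarrow> nat" where
  "zeros xs = length (filter Not xs)"

definition node :: "nat \<Rightarrow> nat \<Rightarrow> bool list \<Rightarrow> int \<times> int" where
  "node m r xs = (int m - int (length xs), int r - int (zeros xs))"

definition is_end_node :: "int \<times> int \<Rightarrow> bool" where
  "is_end_node p \<longleftrightarrow> (fst p \<ge> 1 \<and> snd p = 0) \<or> (fst p \<ge> 1 \<and> fst p = snd p)"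

definition end_subpath :: "nat \<Rightarrow> nat \<Rightarrow> bool list \<Rightarrow> bool" where
  "end_subpath m r xs \<longleftrightarrow> is_end_node (node m r xs)
     \<and> (\<forall>k < length xs. \<not> is_end_node (node m r (take k xs)))"

definition left_end_path :: "nat \<Rightarrow> nat \<Rightarrow> bool list \<Rightarrow> bool" where
  "left_end_path m r p \<longleftrightarrow> (\<exists>xs g. end_subpath m r xs \<and> g \<ge> 1 \<and> node m r xs = (int g, 0)
      \<and> p = xs @ replicate g True)"

definition right_end_path :: "nat \<Rightarrow> nat \<Rightarrow> bool list \<Rightarrow> bool" where
  "right_end_path m r p \<longleftrightarrow> (\<exists>xs ys h. end_subpath m r xs \<and> h \<ge> 1 \<and> node m r xs = (int h, int h)
      \<and> length ys = h \<and> p = xs @ ys)"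

definition Gamma_g :: "nat \<Rightarrow> nat \<Rightarrow> nat \<Rightarrow> bool list set" where
  "Gamma_g m r g = {xs @ replicate g True | xs. end_subpath m r xs \<and> node m r xs = (int g, 0)}"

definition xi_star_g :: "nat \<Rightarrow> nat \<Rightarrow> nat \<Rightarrow> bool list" where
  "xi_star_g m r g = replicate (r - 1) False @ replicate (m - r - g) True @ [False] @ replicate g True"

definition xi_star :: "nat \<Rightarrow> nat \<Rightarrow> bool list" where
  "xi_star m r = replicate r False @ replicate (m - r) True"

end

theory Submission
  imports Defs
begin

text \<open>Squaring commutes badly with halving: \<open>(y/2^n + 1)^2 - 1 \<le> ((y+1)^2 - 1)/2^n\<close> for
  \<open>y \<ge> 0\<close>. Hence, among strings with given numbers of zeros and ones, \<open>\<mu>\<close> is largest when all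
  zeros come first. As \<open>\<mu>\<close> is also monotone in its starting value, extra leading zeros only increase
  it and extra trailing ones only decrease it, so left-end paths and right-end subpaths are dominated
  by \<open>0^r 1^(m-r)\<close>. In \<open>\<Gamma>^g\<close> the step before \<open>1^g\<close> must be a zero (otherwise the walk would
  have stopped earlier), and sorting the prefix before it yields \<open>\<xi>\<^sub>*^g\<close>.\<close>

lemma mu_step_nonneg: "0 \<le> x \<Longrightarrow> 0 \<le> mu_step x b"
  by (cases b) auto

lemma foldl_mu_step_nonneg: "0 \<le> x \<Longrightarrow> 0 \<le> foldl mu_step x xs"
  by (induction xs arbitrary: x) (auto simp: mu_step_nonneg)

lemma mu_step_mono: "0 \<le> x \<Longrightarrow> x \<le> y \<Longrightarrow> mu_step x b \<le> mu_step y b"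
  by (cases b) (auto intro: power_mono)

lemma foldl_mu_step_mono: "0 \<le> x \<Longrightarrow> x \<le> y \<Longrightarrow> foldl mu_step x xs \<le> foldl mu_step y xs"
  by (induction xs arbitrary: x y) (auto simp: mu_step_nonneg mu_step_mono)

lemma foldl_mu_step_ones: "foldl mu_step y (replicate n True) = y / 2^n"
  by (induction n arbitrary: y) (auto simp: replicate_app_Cons_same)

lemma foldl_mu_step_zeros_ge: "0 \<le> y \<Longrightarrow> y \<le> foldl mu_step y (replicate n False)"
proof (induction n arbitrary: y)
  case (Suc n)
  have "y \<le> mu_step y False" and "0 \<le> mu_step y False"
    using Suc.prems by (simp_all add: power2_eq_square algebra_simps)
  then show ?case using Suc.IH[of "mu_step y False"] by simp
qed simp

lemma foldl_mu_step_zeros_mono: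
  assumes "0 \<le> y" "a \<le> b"
  shows "foldl mu_step y (replicate a False) \<le> foldl mu_step y (replicate b False)"
proof -
  have "replicate b False = replicate a False @ replicate (b - a) False"
    using assms(2) by (simp flip: replicate_add)
  then show ?thesis
    using foldl_mu_step_zeros_ge foldl_mu_step_nonneg assms(1) by simp
qed

lemma mu_step_zero_after_halving_le:
  assumes "0 \<le> y"
  shows "mu_step (y / 2^n) False \<le> mu_step y False / 2^n"
proof -
  have "y * y * 2^n \<le> y * y * (2^n * 2^n)"
    using assms by (intro mult_left_mono) auto
  then show ?thesis by (simp add: power2_eq_square field_simps)
qed

lemma zeros_Nil [simp]: "zeros [] = 0"
  by (simp add: zeros_def)

lemma zeros_Cons [simp]: "zeros (b # xs) = (if b then zeros xs else Suc (zeros xs))"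
  by (simp add: zeros_def)

lemma zeros_append [simp]: "zeros (xs @ ys) = zeros xs + zeros ys"
  by (simp add: zeros_def)

lemma zeros_replicate [simp]: "zeros (replicate n b) = (if b then 0 else n)"
  by (simp add: zeros_def)

lemma zeros_le_length: "zeros xs \<le> length xs"
  unfolding zeros_def by (rule length_filter_le)

definition zeros_first :: "bool list \<Rightarrow> bool list" where
  "zeros_first xs = replicate (zeros xs) False @ replicate (length xs - zeros xs) True"

lemma foldl_mu_step_le_zeros_first:
  "0 \<le> x \<Longrightarrow> foldl mu_step x xs \<le> foldl mu_step x (zeros_first xs)"
proof (induction xs rule: rev_induct)
  case Nil
  then show ?case by (simp add: zeros_first_def)
next
  case (snoc b xs)
  define y where "y = foldl mu_step x (replicate (zeros xs) False)"
  define k where "k = length xs - zeros xs"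
  have y: "0 \<le> y" unfolding y_def using foldl_mu_step_nonneg snoc.prems by blast
  have sorted: "foldl mu_step x (zeros_first xs) = y / 2^k"
    by (simp add: zeros_first_def y_def k_def foldl_mu_step_ones)
  have "foldl mu_step x (xs @ [b]) = mu_step (foldl mu_step x xs) b" by simp
  also have "\<dots> \<le> mu_step (y / 2^k) b"
    using mu_step_mono foldl_mu_step_nonneg snoc sorted by metis
  also have "\<dots> \<le> foldl mu_step x (zeros_first (xs @ [b]))"
  proof (cases b)
    case True
    have "length xs + 1 - zeros xs = Suc k"
      using zeros_le_length[of xs] by (simp add: k_def)
    then show ?thesis
      using True by (simp add: zeros_first_def y_def foldl_mu_step_ones)
  next
    case False
    have "mu_step (y / 2^k) False \<le> mu_step y False / 2^k"
      by (rule mu_step_zero_after_halving_le[OF y])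
    also have "\<dots> = foldl mu_step x (zeros_first (xs @ [b]))"
      using False by (simp add: zeros_first_def y_def k_def foldl_mu_step_ones
          flip: replicate_append_same)
    finally show ?thesis using False by simp
  qed
  finally show ?case .
qed

lemma mu_initial_nonneg:
  assumes "0 < eps" "eps \<le> 1"
  shows "0 \<le> 1 / eps^2 - (1::real)"
proof -
  have "eps^2 \<le> 1" using assms by (simp add: power_le_one)
  then show ?thesis using assms by (simp add: field_simps)
qed

lemma mu_le_zeros_first: "0 < eps \<Longrightarrow> eps \<le> 1 \<Longrightarrow> mu eps xs \<le> mu eps (zeros_first xs)"
  unfolding mu_def by (intro foldl_mu_step_le_zeros_first mu_initial_nonneg)

lemma mu_nonneg: "0 < eps \<Longrightarrow> eps \<le> 1 \<Longrightarrow> 0 \<le> mu eps xs"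
  unfolding mu_def by (intro foldl_mu_step_nonneg mu_initial_nonneg)

lemma mu_append: "mu eps (xs @ ys) = foldl mu_step (mu eps xs) ys"
  by (simp add: mu_def)

lemma mu_le_xi_star:
  assumes eps: "0 < eps" "eps \<le> 1"
    and "zeros xs \<le> r" and "m - r \<le> length xs - zeros xs"
  shows "mu eps xs \<le> mu eps (xi_star m r)"
proof -
  define z where "z = mu eps (replicate (zeros xs) False)"
  define z' where "z' = mu eps (replicate r False)"
  have "z \<le> z'"
    unfolding z_def z'_def mu_def
    using assms by (intro foldl_mu_step_zeros_mono mu_initial_nonneg) auto
  moreover have "0 \<le> z" unfolding z_def using mu_nonneg eps by blast
  ultimately have "z / 2^(length xs - zeros xs) \<le> z' / 2^(m - r)"
    using assms(4) by (intro frac_le power_increasing) auto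
  moreover have "mu eps xs \<le> z / 2^(length xs - zeros xs)"
    using mu_le_zeros_first[OF eps, of xs]
    by (simp add: zeros_first_def mu_append z_def foldl_mu_step_ones)
  ultimately show ?thesis
    by (simp add: xi_star_def mu_append z'_def foldl_mu_step_ones)
qed

lemma node_eq_iff:
  "node m r xs = (a, c) \<longleftrightarrow> a = int m - int (length xs) \<and> c = int r - int (zeros xs)"
  by (auto simp: node_def)

lemma Gamma_g_decompose:
  assumes "\<xi> \<in> Gamma_g m r g" and "1 \<le> r"
  obtains z where "\<xi> = z @ False # replicate g True"
    and "zeros z = r - 1" and "length z = m - g - 1"
proof -
  obtain ys where \<xi>: "\<xi> = ys @ replicate g True"
    and ys: "end_subpath m r ys" "node m r ys = (int g, 0)"
    using assms(1) unfolding Gamma_g_def by blast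
  have "ys \<noteq> []" using ys(2) assms(2) by (auto simp: node_def)
  then obtain z b where zb: "ys = z @ [b]" by (metis rev_exhaust)
  have b: "\<not> b"
  proof
    assume b
    then have "is_end_node (node m r z)"
      using ys(2) unfolding zb by (simp add: node_def is_end_node_def)
    moreover have "take (length z) ys = z" "length z < length ys" by (simp_all add: zb)
    ultimately show False using ys(1) unfolding end_subpath_def by metis
  qed
  have "zeros z = r - 1" "length z = m - g - 1"
    using ys(2) b assms(2) unfolding zb by (auto simp: node_eq_iff)
  with b show thesis using that \<xi> zb by simp
qed

lemma xi_star_g_in_Gamma_g:
  assumes "1 \<le> r" "1 \<le> g" "g \<le> m - r"
  shows "xi_star_g m r g \<in> Gamma_g m r g"
proof -
  define xs where "xs = replicate (r - 1) False @ replicate (m - r - g) True @ [False]"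
  have "\<not> is_end_node (node m r (take k xs))" if "k < length xs" for k
  proof -
    have "zeros (take k xs) = min k (r - 1)"
      using that by (simp add: xs_def take_append min_def)
    then show ?thesis
      using that assms by (auto simp: node_def is_end_node_def xs_def min_def split: if_splits)
  qed
  moreover have node: "node m r xs = (int g, 0)"
    using assms by (simp add: xs_def node_def)
  ultimately have "end_subpath m r xs"
    using assms by (simp add: end_subpath_def is_end_node_def)
  with node show ?thesis
    unfolding Gamma_g_def xi_star_g_def xs_def by auto
qed

lemma mu_Gamma_g_le_xi_star_g:
  assumes eps: "0 < eps" "eps \<le> 1" and "1 \<le> r" and "\<xi> \<in> Gamma_g m r g"
  shows "mu eps \<xi> \<le> mu eps (xi_star_g m r g)"
proof -
  obtain z where \<xi>: "\<xi> = z @ False # replicate g True"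
    and z: "zeros z = r - 1" "length z = m - g - 1"
    using Gamma_g_decompose assms(3,4) by blast
  have sorted: "zeros_first z = replicate (r - 1) False @ replicate (m - r - g) True"
    using z assms(3) by (simp add: zeros_first_def)
  have "mu_step (mu eps z) False \<le> mu_step (mu eps (zeros_first z)) False"
    by (intro mu_step_mono mu_nonneg mu_le_zeros_first eps)
  then have "foldl mu_step (mu_step (mu eps z) False) (replicate g True)
      \<le> foldl mu_step (mu_step (mu eps (zeros_first z)) False) (replicate g True)"
    by (intro foldl_mu_step_mono mu_step_nonneg mu_nonneg eps)
  then show ?thesis
    by (simp add: \<xi> mu_append sorted xi_star_g_def)
qed

lemma left_end_path_xi_star:
  assumes "1 \<le> r" "r < m"
  shows "left_end_path m r (xi_star m r)"
proof -
  have "end_subpath m r (replicate r False)"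
    using assms by (auto simp: end_subpath_def node_def is_end_node_def)
  moreover have "node m r (replicate r False) = (int (m - r), 0)"
    using assms by (simp add: node_def)
  ultimately show ?thesis
    using assms unfolding left_end_path_def xi_star_def
    by (intro exI[of _ "replicate r False"] exI[of _ "m - r"]) auto
qed

lemma mu_left_end_path_le_xi_star:
  assumes "0 < eps" "eps \<le> 1" and "left_end_path m r \<xi>"
  shows "mu eps \<xi> \<le> mu eps (xi_star m r)"
proof -
  obtain xs g where "node m r xs = (int g, 0)" "\<xi> = xs @ replicate g True"
    using assms(3) unfolding left_end_path_def by blast
  then have "zeros \<xi> = r" "length \<xi> = m" by (auto simp: node_eq_iff)
  then show ?thesis using mu_le_xi_star assms(1,2) by simp
qed

lemma mu_right_end_le_xi_star:
  assumes "0 < eps" "eps \<le> 1" and "node m r xs = (int h, int h)"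
  shows "mu eps xs \<le> mu eps (xi_star m r)"
proof -
  have "zeros xs \<le> r" "length xs - zeros xs = m - r"
    using assms(3) by (auto simp: node_eq_iff)
  then show ?thesis using mu_le_xi_star assms(1,2) by simp
qed

theorem lemma8:
  fixes m r :: nat and eps :: real
  assumes "1 \<le> r" and "r < m" and "0 < eps" and "eps < 1"
  shows "(\<forall>g. 1 \<le> g \<and> g \<le> m - r \<longrightarrow>
            xi_star_g m r g \<in> Gamma_g m r g \<and>
            (\<forall>\<xi> \<in> Gamma_g m r g. mu eps \<xi> \<le> mu eps (xi_star_g m r g)))
       \<and> left_end_path m r (xi_star m r)
       \<and> (\<forall>\<xi>. left_end_path m r \<xi> \<longrightarrow> mu eps \<xi> \<le> mu eps (xi_star m r))
       \<and> (\<forall>\<xi> xs ys h. \<xi> = xs @ ys \<and> end_subpath m r xs \<and> h \<ge> 1 \<and> node m r xs = (int h, int h)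
            \<and> length ys = h \<longrightarrow> mu eps xs \<le> mu eps (xi_star m r))"
proof -
  have eps: "0 < eps" "eps \<le> 1" using assms(3,4) by simp_all
  show ?thesis
    using xi_star_g_in_Gamma_g[OF assms(1)] mu_Gamma_g_le_xi_star_g[OF eps assms(1)]
      left_end_path_xi_star[OF assms(1,2)] mu_left_end_path_le_xi_star[OF eps]
      mu_right_end_le_xi_star[OF eps]
    by blast
qed

end
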